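(* Let $q$ be an odd prime power, $f$ a planar function on $\mathbb F_{q^2}$, and $\theta\in\mathbb F_{q^2}^*$ such that for every $c\in\mathbb F_q$, $\#\{x\in\mathbb F_{q^2}:\theta_1f_0(x)-\theta_0f_1(x)=c\}$ equals $q+1$ if $c\neq0$ and $1$ if $c=0$. Then the unital $\mathcal U_\theta:=\{(x,t\theta):x\in\mathbb F_{q^2},t\in\mathbb F_q\}\cup\{(\infty)\}$ of order $q$ in $\Pi(f)$ is self-dual.
   Context: A function $f:\mathbb F_{q^2}\to\mathbb F_{q^2}$ is planar if for every $a\neq0$ the map $x\mapsto f(x+a)-f(x)$ is a bijection. For planar $f$, $\Pi(f)$ is the projective plane with points $(x,y)\in\mathbb F_{q^2}^2$ and $(a)$ for $a\in\mathbb F_{q^2}\cup\{\infty\}$, and lines $L_{a,b}=\{(x,f(x+a)-b):x\in\mathbb F_{q^2}\}\cup\{(a)\}$, $N_a=\{(a,y):y\in\mathbb F_{q^2}\}\cup\{(\infty)\}$ ($a,b\in\mathbb F_{q^2}$), $L_\infty=\{(a):a\in\mathbb F_{q^2}\cup\{\infty\}\}$, incidence being membership. A fixed $\xi\in\mathbb F_{q^2}\setminus\mathbb F_q$ is chosen; $\theta=\theta_0+\theta_1\xi$ and $f(x)=f_0(x)+f_1(x)\xi$ with $\theta_i,f_i(x)\in\mathbb F_q$. A unital $\mathcal U$ embedded in a projective plane $\Pi$ of order $q^2$ (a set of $q^3+1$ points meeting each line in $1$ or $q+1$ points) is viewed as the $2$-$(q^3+1,q+1,1)$ design whose blocks are the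 intersections with lines meeting it in $q+1$ points. Its dual unital $\mathcal U^*$ is the design whose points are the tangent lines of $\mathcal U$ (lines meeting it in exactly one point) and whose blocks correspond to the points of $\Pi$ not in $\mathcal U$, a tangent line being incident with such a point if it contains it. $\mathcal U$ is self-dual if $\mathcal U$ and $\mathcal U^*$ are isomorphic as designs. *)

theory Defs
  imports "HOL-Computational_Algebra.Primes" "HOL-Library.Cardinality"
begin

text \<open>Finite field F_{q^2} is modelled by a finite field type 'a with CARD('a) = q^2;
  the subfield F_q is the set of elements fixed by x \<mapsto> x^q.\<close>

definition Fq :: "nat \<Rightarrow> 'a::field set" where
  "Fq q = {x. x ^ q = x}"

definition comp0 :: "nat \<Rightarrow> 'a::field \<Rightarrow> 'a \<Rightarrow> 'a" where
  "comp0 q xi z = (THE a. a \<in> Fq q \<and> (\<exists>b \<in> Fq q. z = a + b * xi))"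

definition comp1 :: "nat \<Rightarrow> 'a::field \<Rightarrow> 'a \<Rightarrow> 'a" where
  "comp1 q xi z = (THE b. b \<in> Fq q \<and> (\<exists>a \<in> Fq q. z = a + b * xi))"

definition planar :: "('a::field \<Rightarrow> 'a) \<Rightarrow> bool" where
  "planar f \<longleftrightarrow> (\<forall>a. a \<noteq> 0 \<longrightarrow> bij (\<lambda>x. f (x + a) - f x))"

datatype 'a point = Aff 'a 'a | Dir 'a | Inf

datatype 'a line = L 'a 'a | N 'a | Linf

fun inc :: "('a::field \<Rightarrow> 'a) \<Rightarrow> 'a point \<Rightarrow> 'a line \<Rightarrow> bool" where
  "inc f (Aff x y) (L a b) = (y = f (x + a) - b)"
| "inc f (Dir c) (L a b) = (c = a)"
| "inc f Inf (L a b) = False"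
| "inc f (Aff x y) (N a) = (x = a)"
| "inc f (Dir c) (N a) = False"
| "inc f Inf (N a) = True"
| "inc f (Aff x y) Linf = False"
| "inc f (Dir c) Linf = True"
| "inc f Inf Linf = True"

definition U_theta :: "nat \<Rightarrow> 'a::field \<Rightarrow> 'a point set" where
  "U_theta q \<theta> = {Aff x (t * \<theta>) | x t. t \<in> Fq q} \<union> {Inf}"

definition is_unital :: "('a::field \<Rightarrow> 'a) \<Rightarrow> nat \<Rightarrow> 'a point set \<Rightarrow> bool" where
  "is_unital f q U \<longleftrightarrow> card U = q ^ 3 + 1 \<and>
     (\<forall>l. card {P \<in> U. inc f P l} = 1 \<or> card {P \<in> U. inc f P l} = q + 1)"

definition secant_lines :: "('a::field \<Rightarrow> 'a) \<Rightarrow> nat \<Rightarrow> 'a point set \<Rightarrow> 'a line set" where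
  "secant_lines f q U = {l. card {P \<in> U. inc f P l} = q + 1}"

definition tangent_lines :: "('a::field \<Rightarrow> 'a) \<Rightarrow> 'a point set \<Rightarrow> 'a line set" where
  "tangent_lines f U = {l. card {P \<in> U. inc f P l} = 1}"

definition design_iso ::
  "'p set \<Rightarrow> 'b set \<Rightarrow> ('p \<Rightarrow> 'b \<Rightarrow> bool) \<Rightarrow> 'p2 set \<Rightarrow> 'b2 set \<Rightarrow> ('p2 \<Rightarrow> 'b2 \<Rightarrow> bool) \<Rightarrow> bool" where
  "design_iso P B I P' B' I' \<longleftrightarrow>
     (\<exists>\<alpha> \<beta>. bij_betw \<alpha> P P' \<and> bij_betw \<beta> B B' \<and>
        (\<forall>p\<in>P. \<forall>b\<in>B. I p b \<longleftrightarrow> I' (\<alpha> p) (\<beta> b)))"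

text \<open>Self-duality: the design (U, secant lines, incidence) is isomorphic to the dual
  design (tangent lines, points off U, "tangent line contains point").\<close>
definition self_dual_unital :: "('a::field \<Rightarrow> 'a) \<Rightarrow> nat \<Rightarrow> 'a point set \<Rightarrow> bool" where
  "self_dual_unital f q U \<longleftrightarrow>
     design_iso U (secant_lines f q U) (inc f)
                (tangent_lines f U) (- U) (\<lambda>l P. inc f P l)"

end

theory Submission
  imports Defs "HOL-Number_Theory.Residues" "HOL-Computational_Algebra.Polynomial"
begin

text \<open>
  The map sending \<open>(x, y)\<close> to \<open>L\<^sub>x\<^sub>,\<^sub>y\<close>, \<open>(a)\<close> to \<open>N\<^sub>a\<close> and \<open>(\<infinity>)\<close> to \<open>L\<^sub>\<infinity>\<close> is a polarity
  of \<open>\<Pi>(f)\<close>: \<open>(x, y)\<close> lies on \<open>L\<^sub>a\<^sub>,\<^sub>b\<close> iff \<open>(a, b)\<close> lies on \<open>L\<^sub>x\<^sub>,\<^sub>y\<close>, since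
  \<open>y = f (x + a) - b\<close> is symmetric under \<open>(x, y) \<leftrightarrow> (a, b)\<close>. Put
  \<open>D(w) = \<theta>\<^sub>1 w\<^sub>0 - \<theta>\<^sub>0 w\<^sub>1\<close> (\<open>coord_det \<theta> w\<close> below); it is \<open>F\<^sub>q\<close>-linear with kernel \<open>F\<^sub>q \<theta>\<close>, so an affine
  point \<open>(x, y)\<close> lies in \<open>U\<^sub>\<theta>\<close> iff \<open>D(y) = 0\<close>, and \<open>L\<^sub>a\<^sub>,\<^sub>b\<close> meets \<open>U\<^sub>\<theta>\<close> in as many
  points as there are \<open>z\<close> with \<open>D(f z) = D(b)\<close>: by hypothesis \<open>1\<close> if \<open>(a, b) \<in> U\<^sub>\<theta>\<close> and
  \<open>q + 1\<close> otherwise. As \<open>N\<^sub>a\<close> meets \<open>U\<^sub>\<theta>\<close> in \<open>q + 1\<close> points and \<open>L\<^sub>\<infinity>\<close> only in \<open>(\<infinity>)\<close>,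
  a line is tangent exactly when its pole lies in \<open>U\<^sub>\<theta>\<close>. So the polarity maps \<open>U\<^sub>\<theta>\<close>
  onto the tangent lines and the secant lines onto the points off \<open>U\<^sub>\<theta>\<close>, preserving
  incidence: this is the isomorphism with the dual unital.
\<close>

section \<open>The subfield \<open>F\<^sub>q\<close> of a field of order \<open>q\<^sup>2\<close>\<close>

lemma power_card_eq_self:
  fixes x :: "'a::{field,finite}"
  shows "x ^ CARD('a) = x"
proof (cases "x = 0")
  case True
  then show ?thesis by (simp add: power_0_left)
next
  case False
  have "(\<Prod>y\<in>UNIV - {0}. x * y) = (\<Prod>y\<in>UNIV - {0::'a}. y)"
    by (rule prod.reindex_bij_witness[of _ "\<lambda>y. y / x" "\<lambda>y. x * y"]) (use False in auto)
  then have "x ^ (CARD('a) - 1) * (\<Prod>y\<in>UNIV - {0::'a}. y) = 1 * (\<Prod>y\<in>UNIV - {0::'a}. y)"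
    by (simp add: prod.distrib)
  then have "x ^ (CARD('a) - 1) = 1"
    by (subst (asm) mult_right_cancel) auto
  moreover have "CARD('a) = Suc (CARD('a) - 1)"
    by (simp add: finite_UNIV_card_ge_0)
  ultimately show ?thesis
    by (metis mult_1_right power_Suc)
qed

lemma prime_CHAR_finite_field: "prime CHAR('a::{field,finite})"
  by (intro prime_CHAR_semidom finite_imp_CHAR_pos) simp

lemma CHAR_eq_prime_of_card:
  assumes "prime p" and "CARD('a::{field,finite}) = p ^ n"
  shows "CHAR('a) = p"
proof -
  have "CHAR('a) dvd p ^ n"
    using CHAR_dvd_CARD[where 'a = 'a] assms(2) by simp
  then show ?thesis
    using assms(1) prime_CHAR_finite_field prime_dvd_power primes_dvd_imp_eq by blast
qed

lemma Fq_mult: "a \<in> Fq q \<Longrightarrow> b \<in> Fq q \<Longrightarrow> a * b \<in> Fq q"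
  by (simp add: Fq_def power_mult_distrib)

lemma Fq_divide: "a \<in> Fq q \<Longrightarrow> b \<in> Fq q \<Longrightarrow> a / b \<in> Fq q"
  by (simp add: Fq_def power_divide)

context
  fixes q :: nat
  assumes q_CHAR_power: "\<exists>k. q = CHAR('a::{field,finite}) ^ k"
begin

lemma frobenius_add: "(x + y :: 'a) ^ q = x ^ q + y ^ q"
  using freshmans_dream' prime_CHAR_finite_field q_CHAR_power by blast

lemma frobenius_diff: "(x - y :: 'a) ^ q = x ^ q - y ^ q"
  using frobenius_add[of "x - y" y] by (simp add: eq_diff_eq)

lemma Fq_diff: "(a :: 'a) \<in> Fq q \<Longrightarrow> b \<in> Fq q \<Longrightarrow> a - b \<in> Fq q"
  by (simp add: Fq_def frobenius_diff)

lemma card_Fq_ge: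
  assumes card_eq: "CARD('a) = q ^ 2" and q_ge_2: "q \<ge> 2"
  shows "q \<le> card (Fq q :: 'a set)"
proof -
  define tr :: "'a \<Rightarrow> 'a" where "tr x = x + x ^ q" for x
  have tr_in_Fq: "tr x \<in> Fq q" for x
  proof -
    have "(x ^ q) ^ q = x"
      using power_card_eq_self[of x] card_eq by (simp flip: power_mult add: power2_eq_square)
    then show ?thesis
      by (simp add: tr_def Fq_def frobenius_add add.commute)
  qed
  have card_fibre: "card {x. tr x = c} \<le> q" for c
  proof -
    define p where "p = monom (1::'a) q + [:-c, 1:]"
    have "degree p = q"
      unfolding p_def using q_ge_2 by (subst degree_add_eq_left) (auto simp: degree_monom_eq)
    moreover have "{x. tr x = c} = {x. poly p x = 0}"
      by (auto simp: p_def tr_def poly_monom algebra_simps)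
    ultimately show ?thesis
      using card_poly_roots_bound[of p] q_ge_2 by fastforce
  qed
  have "(\<Union>c\<in>Fq q. {x. tr x = c}) = UNIV"
    using tr_in_Fq by auto
  then have "q * q = card (\<Union>c\<in>Fq q. {x. tr x = c})"
    using card_eq by (simp add: power2_eq_square)
  also have "\<dots> \<le> (\<Sum>c\<in>Fq q. card {x. tr x = c})"
    by (rule card_UN_le) simp
  also have "\<dots> \<le> card (Fq q :: 'a set) * q"
    using sum_bounded_above[of "Fq q" "\<lambda>c. card {x. tr x = c}" q] card_fibre by simp
  finally show ?thesis
    using q_ge_2 by simp
qed

end

section \<open>Coordinates with respect to the basis \<open>1, \<xi>\<close>\<close>

locale quadratic_extension =
  fixes q :: nat and \<xi> :: "'a::{field,finite}"
  assumes prime_power: "\<exists>p k. prime p \<and> k > 0 \<and> q = p ^ k"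
    and card_eq: "CARD('a) = q ^ 2"
    and xi_notin_Fq: "\<xi> \<notin> Fq q"
begin

lemma q_CHAR_power: "\<exists>k. q = CHAR('a) ^ k"
proof -
  obtain p k where "prime p" "q = p ^ k"
    using prime_power by blast
  moreover from this have "CHAR('a) = p"
    using card_eq by (intro CHAR_eq_prime_of_card[of p "k * 2"]) (simp_all add: power_mult)
  ultimately show ?thesis
    by blast
qed

lemma q_ge_2: "q \<ge> 2"
proof -
  obtain p k where p: "prime p" "k > 0" "q = p ^ k"
    using prime_power by blast
  then have "2 \<le> p ^ 1"
    using prime_ge_2_nat by simp
  also have "p ^ 1 \<le> p ^ k"
    using p by (intro power_increasing) (simp_all add: prime_ge_Suc_0_nat)
  finally show ?thesis
    using p(3) by simp
qed

lemma Fq_basis_unique: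
  assumes "a \<in> Fq q" "b \<in> Fq q" "a' \<in> Fq q" "b' \<in> Fq q" and "a + b * \<xi> = a' + b' * \<xi>"
  shows "a = a' \<and> b = b'"
proof (cases "b = b'")
  case False
  with assms(5) have "\<xi> = (a' - a) / (b - b')"
    by (simp add: field_simps)
  then have "\<xi> \<in> Fq q"
    using assms(1-4) by (simp add: Fq_divide Fq_diff[OF q_CHAR_power])
  with xi_notin_Fq show ?thesis ..
qed (use assms in simp)

lemma card_Fq: "card (Fq q :: 'a set) = q"
  and basis_image_eq_UNIV: "(\<lambda>(a, b). a + b * \<xi>) ` (Fq q \<times> Fq q) = UNIV"
proof -
  let ?h = "\<lambda>(a, b). a + b * \<xi>"
  have "inj_on ?h (Fq q \<times> Fq q)"
  proof (rule inj_onI)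
    fix u v assume u: "u \<in> Fq q \<times> Fq q" and v: "v \<in> Fq q \<times> Fq q" and eq: "?h u = ?h v"
    obtain a b a' b' where u_eq: "u = (a, b)" and v_eq: "v = (a', b')"
      by (cases u; cases v)
    have "a = a' \<and> b = b'"
      using u v eq unfolding u_eq v_eq by (intro Fq_basis_unique) simp_all
    then show "u = v"
      unfolding u_eq v_eq by simp
  qed
  then have card_image: "card (?h ` (Fq q \<times> Fq q)) = card (Fq q :: 'a set) ^ 2"
    by (simp add: card_image card_cartesian_product power2_eq_square)
  moreover have "card (?h ` (Fq q \<times> Fq q)) \<le> q ^ 2"
    using card_eq card_mono[of UNIV "?h ` (Fq q \<times> Fq q)"] by simp
  ultimately have "card (Fq q :: 'a set) ^ 2 \<le> q ^ 2"
    by simp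
  then have "card (Fq q :: 'a set) \<le> q"
    by (rule power2_le_imp_le) simp
  then show "card (Fq q :: 'a set) = q"
    using card_Fq_ge[OF q_CHAR_power card_eq q_ge_2] by simp
  with card_image show "?h ` (Fq q \<times> Fq q) = UNIV"
    using card_eq by (intro card_subset_eq) simp_all
qed

lemma comp_eqI:
  assumes ab: "a \<in> Fq q" "b \<in> Fq q" and z: "z = a + b * \<xi>"
  shows "comp0 q \<xi> z = a" and "comp1 q \<xi> z = b"
proof -
  show "comp0 q \<xi> z = a"
    unfolding comp0_def
  proof (rule the_equality)
    fix a' assume "a' \<in> Fq q \<and> (\<exists>b'\<in>Fq q. z = a' + b' * \<xi>)"
    then show "a' = a"
      using Fq_basis_unique ab z by blast
  qed (use ab z in blast)
  show "comp1 q \<xi> z = b"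
    unfolding comp1_def
  proof (rule the_equality)
    fix b' assume "b' \<in> Fq q \<and> (\<exists>a'\<in>Fq q. z = a' + b' * \<xi>)"
    then show "b' = b"
      using Fq_basis_unique ab z by blast
  qed (use ab z in blast)
qed

lemma comp_in_Fq: "comp0 q \<xi> z \<in> Fq q" "comp1 q \<xi> z \<in> Fq q"
  and comp_decomp: "comp0 q \<xi> z + comp1 q \<xi> z * \<xi> = z"
proof -
  have "z \<in> (\<lambda>(a, b). a + b * \<xi>) ` (Fq q \<times> Fq q)"
    by (simp add: basis_image_eq_UNIV)
  then obtain a b where "a \<in> Fq q" "b \<in> Fq q" "z = a + b * \<xi>"
    by auto
  then show "comp0 q \<xi> z \<in> Fq q" "comp1 q \<xi> z \<in> Fq q" "comp0 q \<xi> z + comp1 q \<xi> z * \<xi> = z"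
    using comp_eqI by simp_all
qed

lemma comp_diff:
  "comp0 q \<xi> (z - w) = comp0 q \<xi> z - comp0 q \<xi> w"
  "comp1 q \<xi> (z - w) = comp1 q \<xi> z - comp1 q \<xi> w"
proof -
  have "z - w = (comp0 q \<xi> z - comp0 q \<xi> w) + (comp1 q \<xi> z - comp1 q \<xi> w) * \<xi>"
    by (subst (1 2) comp_decomp[symmetric]) (simp add: algebra_simps)
  then show "comp0 q \<xi> (z - w) = comp0 q \<xi> z - comp0 q \<xi> w"
      "comp1 q \<xi> (z - w) = comp1 q \<xi> z - comp1 q \<xi> w"
    using comp_eqI[OF Fq_diff[OF q_CHAR_power] Fq_diff[OF q_CHAR_power]] comp_in_Fq by simp_all
qed

definition coord_det :: "'a \<Rightarrow> 'a \<Rightarrow> 'a" where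
  "coord_det \<theta> w = comp1 q \<xi> \<theta> * comp0 q \<xi> w - comp0 q \<xi> \<theta> * comp1 q \<xi> w"

lemma coord_det_in_Fq: "coord_det \<theta> w \<in> Fq q"
  unfolding coord_det_def by (intro Fq_diff[OF q_CHAR_power] Fq_mult comp_in_Fq)

lemma coord_det_diff: "coord_det \<theta> (z - w) = coord_det \<theta> z - coord_det \<theta> w"
  unfolding coord_det_def comp_diff by (simp add: algebra_simps)

lemma coord_det_eq_0_iff:
  assumes "\<theta> \<noteq> 0"
  shows "coord_det \<theta> w = 0 \<longleftrightarrow> w / \<theta> \<in> Fq q"
proof -
  define t0 t1 w0 w1 where "t0 = comp0 q \<xi> \<theta>" and "t1 = comp1 q \<xi> \<theta>"
    and "w0 = comp0 q \<xi> w" and "w1 = comp1 q \<xi> w"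
  have \<theta>: "\<theta> = t0 + t1 * \<xi>" and w: "w = w0 + w1 * \<xi>"
    unfolding t0_def t1_def w0_def w1_def by (simp_all add: comp_decomp)
  have in_Fq: "t0 \<in> Fq q" "t1 \<in> Fq q" "w0 \<in> Fq q" "w1 \<in> Fq q"
    unfolding t0_def t1_def w0_def w1_def by (simp_all add: comp_in_Fq)
  have det: "coord_det \<theta> w = t1 * w0 - t0 * w1"
    unfolding coord_det_def t0_def t1_def w0_def w1_def ..
  show ?thesis
  proof
    assume "coord_det \<theta> w = 0"
    moreover have "t1 * w - w1 * \<theta> = coord_det \<theta> w" and "t0 * w - w0 * \<theta> = - coord_det \<theta> w * \<xi>"
      unfolding det by (subst \<theta>, subst w, simp add: algebra_simps)+
    ultimately have cramer: "t1 * w = w1 * \<theta>" "t0 * w = w0 * \<theta>"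
      by simp_all
    have "t0 \<noteq> 0 \<or> t1 \<noteq> 0"
      using assms \<theta> by auto
    then have "w / \<theta> = w1 / t1 \<or> w / \<theta> = w0 / t0"
      using cramer assms by (auto simp: field_simps)
    then show "w / \<theta> \<in> Fq q"
      using in_Fq Fq_divide by auto
  next
    assume s: "w / \<theta> \<in> Fq q"
    have "w = w / \<theta> * \<theta>"
      using assms by simp
    also have "\<dots> = w / \<theta> * t0 + w / \<theta> * t1 * \<xi>"
      by (subst \<theta>) (simp add: algebra_simps)
    finally have "w0 = w / \<theta> * t0" and "w1 = w / \<theta> * t1"
      using comp_eqI[OF Fq_mult[OF s in_Fq(1)] Fq_mult[OF s in_Fq(2)]] by (simp_all only: w0_def w1_def)
    then show "coord_det \<theta> w = 0"
      unfolding det by simp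
  qed
qed

end

section \<open>A polarity of \<open>\<Pi>(f)\<close>\<close>

fun polar :: "'a point \<Rightarrow> 'a line" where
  "polar (Aff x y) = L x y"
| "polar (Dir a) = N a"
| "polar Inf = Linf"

fun pole :: "'a line \<Rightarrow> 'a point" where
  "pole (L a b) = Aff a b"
| "pole (N a) = Dir a"
| "pole Linf = Inf"

lemma pole_polar [simp]: "pole (polar P) = P"
  by (cases P) simp_all

lemma polar_pole [simp]: "polar (pole l) = l"
  by (cases l) simp_all

lemma inc_pole_polar: "inc f (pole l) (polar P) \<longleftrightarrow> inc f P l"
  by (cases P; cases l) (auto simp: add.commute)

lemma polar_image: "polar ` A = {l. pole l \<in> A}"
proof
  show "{l. pole l \<in> A} \<subseteq> polar ` A"
  proof
    fix l assume "l \<in> {l. pole l \<in> A}"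
    then have "polar (pole l) \<in> polar ` A"
      by blast
    then show "l \<in> polar ` A"
      by simp
  qed
qed auto

lemma self_dual_unital_if_card_inter_eq:
  assumes count: "\<And>l. card {P \<in> U. inc f P l} = (if pole l \<in> U then 1 else q + 1)"
    and "q \<noteq> 0"
  shows "self_dual_unital f q U"
proof -
  have "tangent_lines f U = polar ` U"
    using \<open>q \<noteq> 0\<close> by (simp add: tangent_lines_def count polar_image)
  then have "bij_betw polar U (tangent_lines f U)"
    using inj_on_inverseI[of U pole polar] by (simp add: bij_betw_def)
  moreover have "secant_lines f q U = polar ` (- U)"
    using \<open>q \<noteq> 0\<close> by (simp add: secant_lines_def count polar_image)
  then have "bij_betw pole (secant_lines f q U) (- U)"
    using inj_on_inverseI[of "secant_lines f q U" polar pole] by (simp add: bij_betw_def image_image)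
  ultimately show ?thesis
    unfolding self_dual_unital_def design_iso_def using inc_pole_polar by blast
qed

section \<open>Intersection numbers of \<open>U\<^sub>\<theta>\<close>\<close>

lemma Aff_in_U_theta_iff:
  assumes "\<theta> \<noteq> 0"
  shows "Aff x y \<in> U_theta q \<theta> \<longleftrightarrow> y / \<theta> \<in> Fq q"
proof
  assume "Aff x y \<in> U_theta q \<theta>"
  then obtain t where "t \<in> Fq q" "y = t * \<theta>"
    by (auto simp: U_theta_def)
  with assms show "y / \<theta> \<in> Fq q"
    by simp
next
  assume "y / \<theta> \<in> Fq q"
  moreover have "y = y / \<theta> * \<theta>"
    using assms by simp
  ultimately show "Aff x y \<in> U_theta q \<theta>"
    unfolding U_theta_def by blast
qed

lemma Inf_in_U_theta [simp]: "Inf \<in> U_theta q \<theta>"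
  and Dir_notin_U_theta [simp]: "Dir a \<notin> U_theta q \<theta>"
  by (simp_all add: U_theta_def)

lemma card_U_theta:
  fixes \<theta> :: "'a::{field,finite}"
  assumes "\<theta> \<noteq> 0"
  shows "card (U_theta q \<theta>) = CARD('a) * card (Fq q :: 'a set) + 1"
proof -
  let ?g = "\<lambda>(x, t). Aff x (t * \<theta>)"
  have "U_theta q \<theta> = insert Inf (?g ` (UNIV \<times> Fq q))"
    unfolding U_theta_def by auto
  moreover have "Inf \<notin> ?g ` (UNIV \<times> Fq q)"
    by auto
  moreover have "inj_on ?g (UNIV \<times> Fq q)"
    using assms by (auto simp: inj_on_def)
  ultimately show ?thesis
    by (simp add: card_image card_cartesian_product)
qed

lemma card_U_theta_inter_N:
  fixes \<theta> :: "'a::{field,finite}"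
  assumes "\<theta> \<noteq> 0"
  shows "card {P \<in> U_theta q \<theta>. inc f P (N a)} = card (Fq q :: 'a set) + 1"
proof -
  have "{P \<in> U_theta q \<theta>. inc f P (N a)} = insert Inf ((\<lambda>t. Aff a (t * \<theta>)) ` Fq q)"
    unfolding U_theta_def by auto
  moreover have "Inf \<notin> (\<lambda>t. Aff a (t * \<theta>)) ` Fq q"
    by auto
  moreover have "inj_on (\<lambda>t. Aff a (t * \<theta>)) (Fq q)"
    using assms by (auto simp: inj_on_def)
  ultimately show ?thesis
    by (simp add: card_image)
qed

lemma U_theta_inter_Linf: "{P \<in> U_theta q \<theta>. inc f P Linf} = {Inf}"
  by (auto simp: U_theta_def)

context quadratic_extension
begin

lemma card_U_theta_inter_L:
  assumes "\<theta> \<noteq> 0"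
    and hyp: "\<forall>c \<in> Fq q. card {x. coord_det \<theta> (f x) = c} = (if c \<noteq> 0 then q + 1 else 1)"
  shows "card {P \<in> U_theta q \<theta>. inc f P (L a b)} = (if b / \<theta> \<in> Fq q then 1 else q + 1)"
proof -
  let ?S = "{y. coord_det \<theta> (f y) = coord_det \<theta> b}"
  have "{P \<in> U_theta q \<theta>. inc f P (L a b)} = (\<lambda>y. Aff (y - a) (f y - b)) ` ?S"
  proof (rule Set.set_eqI)
    fix P
    show "P \<in> {P \<in> U_theta q \<theta>. inc f P (L a b)} \<longleftrightarrow> P \<in> (\<lambda>y. Aff (y - a) (f y - b)) ` ?S"
    proof (cases P)
      case (Aff x z)
      have "(f y - b) / \<theta> \<in> Fq q \<longleftrightarrow> coord_det \<theta> (f y) = coord_det \<theta> b" for y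
        by (simp add: coord_det_eq_0_iff[OF assms(1), symmetric] coord_det_diff)
      then show ?thesis
        using Aff by (auto simp: Aff_in_U_theta_iff[OF assms(1)] image_iff intro!: bexI[of _ "x + a"])
    qed auto
  qed
  moreover have "inj_on (\<lambda>y. Aff (y - a) (f y - b)) ?S"
    by (rule inj_onI) simp
  ultimately have "card {P \<in> U_theta q \<theta>. inc f P (L a b)} = card ?S"
    by (simp add: card_image)
  also have "\<dots> = (if coord_det \<theta> b \<noteq> 0 then q + 1 else 1)"
    using hyp coord_det_in_Fq by blast
  finally show ?thesis
    by (simp add: coord_det_eq_0_iff[OF assms(1)])
qed

lemma card_U_theta_inter:
  assumes "\<theta> \<noteq> 0"
    and "\<forall>c \<in> Fq q. card {x. coord_det \<theta> (f x) = c} = (if c \<noteq> 0 then q + 1 else 1)"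
  shows "card {P \<in> U_theta q \<theta>. inc f P l} = (if pole l \<in> U_theta q \<theta> then 1 else q + 1)"
  using assms
  by (cases l) (simp_all add: card_U_theta_inter_L card_U_theta_inter_N card_Fq U_theta_inter_Linf
      Aff_in_U_theta_iff)

end

theorem proposition3p4:
  fixes q :: nat and f :: "'a::{field,finite} \<Rightarrow> 'a" and \<xi> \<theta> :: 'a
  assumes q_pp: "\<exists>p k. prime p \<and> k > 0 \<and> q = p ^ k"
    and q_odd: "odd q"
    and card_field: "CARD('a) = q ^ 2"
    and xi: "\<xi> \<notin> Fq q"
    and f_planar: "planar f"
    and theta_nz: "\<theta> \<noteq> 0"
    and hyp: "\<forall>c \<in> Fq q.
      card {x. comp1 q \<xi> \<theta> * comp0 q \<xi> (f x) - comp0 q \<xi> \<theta> * comp1 q \<xi> (f x) = c}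
        = (if c \<noteq> 0 then q + 1 else 1)"
  shows "is_unital f q (U_theta q \<theta>) \<and> self_dual_unital f q (U_theta q \<theta>)"
proof -
  interpret quadratic_extension q \<xi>
    using q_pp card_field xi by unfold_locales
  have count: "card {P \<in> U_theta q \<theta>. inc f P l} = (if pole l \<in> U_theta q \<theta> then 1 else q + 1)" for l
    using card_U_theta_inter[OF theta_nz] hyp unfolding coord_det_def by blast
  have "card (U_theta q \<theta>) = q ^ 3 + 1"
    using card_U_theta[OF theta_nz] card_field card_Fq by (simp add: power2_eq_square power3_eq_cube)
  moreover have "q \<noteq> 0"
    using q_ge_2 by simp
  ultimately show ?thesis
    unfolding is_unital_def using count self_dual_unital_if_card_inter_eq[OF count] by simp
qed

end
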